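(* For every connected graph $G$, the ordered pair $(O_{\rm SR}(G),O_{\rm R}(G))$ belongs to the set $\{(\mathcal{B},\mathcal{B}),(\mathcal{B},\mathcal{N}),(\mathcal{B},\mathcal{M}),(\mathcal{N},\mathcal{N}),(\mathcal{N},\mathcal{M}),(\mathcal{M},\mathcal{M})\}$.
   Context: All graphs are finite, simple and undirected; $d(x,y)$ is the shortest-path distance. For a connected graph $G$, a set $R\subseteq V(G)$ is a resolving set if for all distinct $x,y\in V(G)$ there is $z\in R$ with $d(x,z)\ne d(y,z)$; a set $S\subseteq V(G)$ is a strong resolving set if for all distinct $x,y\in V(G)$ there exists $z\in S$ such that $x$ lies on a $y$–$z$ geodesic or $y$ lies on an $x$–$z$ geodesic. In the Maker–Breaker resolving game (resp. strong resolving game) on $G$, Maker and Breaker alternately select a not-yet-chosen vertex of $G$; Maker wins if his selected vertices contain a resolving set (resp. strong resolving set) of $G$, and Breaker wins otherwise. In the M-game Maker moves first, in the B-game Breaker moves first. The outcome $O_{\rm R}(G)$ (resp. $O_{\rm SR}(G)$) is $\mathcal{M}$ if Maker has a winning strategy in both the M-game and the B-game, $\mathcal{B}$ if Breaker has a winning strategy in both, and $\mathcal{N}$ if the first player has a winning strategy in each. *)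

theory Defs
  imports Main
begin

definition simple_graph :: "'a set \<Rightarrow> ('a \<Rightarrow> 'a \<Rightarrow> bool) \<Rightarrow> bool" where
  "simple_graph V E \<longleftrightarrow> finite V \<and> (\<forall>x y. E x y \<longrightarrow> x \<in> V \<and> y \<in> V)
     \<and> (\<forall>x y. E x y \<longrightarrow> E y x) \<and> (\<forall>x. \<not> E x x)"

text \<open>A walk is a nonempty list of vertices, consecutive ones adjacent.
Its length is (length of list - 1).\<close>

definition walk :: "'a set \<Rightarrow> ('a \<Rightarrow> 'a \<Rightarrow> bool) \<Rightarrow> 'a list \<Rightarrow> bool" where
  "walk V E xs \<longleftrightarrow> xs \<noteq> [] \<and> set xs \<subseteq> V \<and> (\<forall>i. Suc i < length xs \<longrightarrow> E (xs ! i) (xs ! Suc i))"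

definition walk_between :: "'a set \<Rightarrow> ('a \<Rightarrow> 'a \<Rightarrow> bool) \<Rightarrow> 'a \<Rightarrow> 'a \<Rightarrow> 'a list \<Rightarrow> bool" where
  "walk_between V E x y xs \<longleftrightarrow> walk V E xs \<and> hd xs = x \<and> last xs = y"

definition connected_graph :: "'a set \<Rightarrow> ('a \<Rightarrow> 'a \<Rightarrow> bool) \<Rightarrow> bool" where
  "connected_graph V E \<longleftrightarrow> simple_graph V E \<and> V \<noteq> {}
     \<and> (\<forall>x\<in>V. \<forall>y\<in>V. \<exists>xs. walk_between V E x y xs)"

definition gdist :: "'a set \<Rightarrow> ('a \<Rightarrow> 'a \<Rightarrow> bool) \<Rightarrow> 'a \<Rightarrow> 'a \<Rightarrow> nat" where
  "gdist V E x y = (LEAST n. \<exists>xs. walk_between V E x y xs \<and> length xs = Suc n)"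

definition geodesic :: "'a set \<Rightarrow> ('a \<Rightarrow> 'a \<Rightarrow> bool) \<Rightarrow> 'a \<Rightarrow> 'a \<Rightarrow> 'a list \<Rightarrow> bool" where
  "geodesic V E y z xs \<longleftrightarrow> walk_between V E y z xs \<and> length xs = Suc (gdist V E y z)"

definition on_geodesic :: "'a set \<Rightarrow> ('a \<Rightarrow> 'a \<Rightarrow> bool) \<Rightarrow> 'a \<Rightarrow> 'a \<Rightarrow> 'a \<Rightarrow> bool" where
  "on_geodesic V E x y z \<longleftrightarrow> (\<exists>xs. geodesic V E y z xs \<and> x \<in> set xs)"

definition resolving_set :: "'a set \<Rightarrow> ('a \<Rightarrow> 'a \<Rightarrow> bool) \<Rightarrow> 'a set \<Rightarrow> bool" where
  "resolving_set V E R \<longleftrightarrow> R \<subseteq> V \<and>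
     (\<forall>x\<in>V. \<forall>y\<in>V. x \<noteq> y \<longrightarrow> (\<exists>z\<in>R. gdist V E x z \<noteq> gdist V E y z))"

definition strong_resolving_set :: "'a set \<Rightarrow> ('a \<Rightarrow> 'a \<Rightarrow> bool) \<Rightarrow> 'a set \<Rightarrow> bool" where
  "strong_resolving_set V E S \<longleftrightarrow> S \<subseteq> V \<and>
     (\<forall>x\<in>V. \<forall>y\<in>V. x \<noteq> y \<longrightarrow>
        (\<exists>z\<in>S. on_geodesic V E x y z \<or> on_geodesic V E y x z))"

text \<open>Maker--Breaker game on board V with winning condition W on Maker's final set.
Position: Maker's vertices M, Breaker's vertices B, and the flag mturn
(True = Maker to move).\<close>

inductive maker_wins :: "'a set \<Rightarrow> ('a set \<Rightarrow> bool) \<Rightarrow> 'a set \<Rightarrow> 'a set \<Rightarrow> bool \<Rightarrow> bool"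
  for V :: "'a set" and W :: "'a set \<Rightarrow> bool" where
  mw_end: "V - (M \<union> B) = {} \<Longrightarrow> W M \<Longrightarrow> maker_wins V W M B t"
| mw_maker: "v \<in> V - (M \<union> B) \<Longrightarrow> maker_wins V W (insert v M) B False
             \<Longrightarrow> maker_wins V W M B True"
| mw_breaker: "V - (M \<union> B) \<noteq> {} \<Longrightarrow> (\<forall>v\<in>V - (M \<union> B). maker_wins V W M (insert v B) True)
             \<Longrightarrow> maker_wins V W M B False"

inductive breaker_wins :: "'a set \<Rightarrow> ('a set \<Rightarrow> bool) \<Rightarrow> 'a set \<Rightarrow> 'a set \<Rightarrow> bool \<Rightarrow> bool"
  for V :: "'a set" and W :: "'a set \<Rightarrow> bool" where
  bw_end: "V - (M \<union> B) = {} \<Longrightarrow> \<not> W M \<Longrightarrow> breaker_wins V W M B t"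
| bw_breaker: "v \<in> V - (M \<union> B) \<Longrightarrow> breaker_wins V W M (insert v B) True
             \<Longrightarrow> breaker_wins V W M B False"
| bw_maker: "V - (M \<union> B) \<noteq> {} \<Longrightarrow> (\<forall>v\<in>V - (M \<union> B). breaker_wins V W (insert v M) B False)
             \<Longrightarrow> breaker_wins V W M B True"

datatype outcome = OM | OB | ON

text \<open>has_outcome V W o: the game (board V, winning condition W) has outcome o.
M-game starts from (empty, empty, Maker to move), B-game from (empty, empty, Breaker to move).\<close>

definition has_outcome :: "'a set \<Rightarrow> ('a set \<Rightarrow> bool) \<Rightarrow> outcome \<Rightarrow> bool" where
  "has_outcome V W oc \<longleftrightarrow>
     (case oc of
        OM \<Rightarrow> maker_wins V W {} {} True \<and> maker_wins V W {} {} False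
      | OB \<Rightarrow> breaker_wins V W {} {} True \<and> breaker_wins V W {} {} False
      | ON \<Rightarrow> maker_wins V W {} {} True \<and> breaker_wins V W {} {} False)"

definition O_R :: "'a set \<Rightarrow> ('a \<Rightarrow> 'a \<Rightarrow> bool) \<Rightarrow> outcome \<Rightarrow> bool" where
  "O_R V E oc \<longleftrightarrow> has_outcome V (\<lambda>M. \<exists>R\<subseteq>M. resolving_set V E R) oc"

definition O_SR :: "'a set \<Rightarrow> ('a \<Rightarrow> 'a \<Rightarrow> bool) \<Rightarrow> outcome \<Rightarrow> bool" where
  "O_SR V E oc \<longleftrightarrow> has_outcome V (\<lambda>M. \<exists>S\<subseteq>M. strong_resolving_set V E S) oc"

end

theory Submission
  imports Defs
begin

text \<open>A vertex x \<noteq> y on a y--z geodesic is strictly closer to z than y is, so every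
strong resolving set is resolving and Maker's target in the strong resolving game
implies his target in the resolving game. Both targets are upward closed, and for
upward-closed targets on a finite board the game is determined and an extra vertex
never hurts Breaker; hence a Breaker win as second player gives one as first player,
the outcome is one of \<B>, \<N>, \<M>, and with \<B> < \<N> < \<M> it is monotone in the target.\<close>

lemma walk_between_drop:
  assumes "walk_between V E y z xs" "i < length xs"
  shows "walk_between V E (xs ! i) z (drop i xs)"
  using assms unfolding walk_between_def walk_def
  by (auto simp: hd_drop_conv_nth dest: in_set_dropD)

lemma gdist_le_walk_length:
  assumes "walk_between V E x z xs"
  shows "gdist V E x z \<le> length xs - 1"
proof -
  have "xs \<noteq> []" using assms unfolding walk_between_def walk_def by blast
  show ?thesis unfolding gdist_def by (rule Least_le) (use assms \<open>xs \<noteq> []\<close> in auto)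
qed

lemma gdist_less_if_on_geodesic:
  assumes "on_geodesic V E x y z" "x \<noteq> y"
  shows "gdist V E x z < gdist V E y z"
proof -
  obtain xs i where geo: "geodesic V E y z xs" and i: "i < length xs" "xs ! i = x"
    using assms(1) unfolding on_geodesic_def by (metis in_set_conv_nth)
  have walk: "walk_between V E y z xs" and len: "length xs = Suc (gdist V E y z)"
    using geo unfolding geodesic_def by auto
  have "i \<noteq> 0"
    using i walk assms(2) unfolding walk_between_def walk_def by (metis hd_conv_nth)
  moreover have "gdist V E x z \<le> length xs - i - 1"
    using gdist_le_walk_length[OF walk_between_drop[OF walk i(1)]] i by simp
  ultimately show ?thesis using len i(1) by linarith
qed

lemma strong_resolving_set_imp_resolving_set:
  assumes "strong_resolving_set V E S"
  shows "resolving_set V E S"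
  using assms gdist_less_if_on_geodesic
  unfolding strong_resolving_set_def resolving_set_def by (metis less_irrefl)

lemma mono_exists_subset: "mono (\<lambda>M. \<exists>R\<subseteq>M. P R)"
  unfolding mono_def le_bool_def by (meson order_trans)

lemma maker_wins_mono_target:
  assumes "maker_wins V W M B t" "W \<le> W'"
  shows "maker_wins V W' M B t"
  using assms(1)
proof induction
  case (mw_end M B t)
  then show ?case using assms(2) by (auto intro: maker_wins.mw_end)
next
  case (mw_maker v M B)
  then show ?case by (blast intro: maker_wins.mw_maker)
next
  case (mw_breaker M B)
  then show ?case by (auto intro: maker_wins.mw_breaker)
qed

lemma breaker_wins_imp_not_target:
  assumes "breaker_wins V W M B t" "mono W"
  shows "\<not> W M"
  using assms(1)
proof induction
  case (bw_maker M B)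
  then obtain v where "\<not> W (insert v M)" by blast
  then show ?case using monoD[OF assms(2), of M "insert v M"] by (auto simp: le_bool_def)
qed auto

lemma breaker_wins_superset:
  assumes "breaker_wins V W M B t" "mono W" "B \<subseteq> B'"
  shows "breaker_wins V W M B' t"
  using assms(1,3)
proof (induction arbitrary: B' rule: breaker_wins.induct)
  case (bw_end M B t)
  then show ?case by (auto intro: breaker_wins.bw_end)
next
  case (bw_breaker v M B)
  have "\<not> W M"
    using breaker_wins_imp_not_target[OF bw_breaker.hyps(2) assms(2)] .
  show ?case
  proof (cases "V - (M \<union> B') = {}")
    case True
    then show ?thesis using \<open>\<not> W M\<close> by (rule breaker_wins.bw_end)
  next
    case False
    \<comment> \<open>if the strategy asks for a vertex Breaker already owns, he plays any free one\<close>
    then obtain w where w: "w \<in> V - (M \<union> B')" "v \<in> B' \<or> w = v"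
      using bw_breaker.hyps(1) by blast
    then have "breaker_wins V W M (insert w B') True"
      using bw_breaker.IH bw_breaker.prems by blast
    with w(1) show ?thesis by (rule breaker_wins.bw_breaker)
  qed
next
  case (bw_maker M B)
  then have "breaker_wins V W M B True"
    by (auto intro: breaker_wins.bw_maker)
  then have "\<not> W M" using breaker_wins_imp_not_target assms(2) by blast
  show ?case
  proof (cases "V - (M \<union> B') = {}")
    case True
    then show ?thesis using \<open>\<not> W M\<close> by (rule breaker_wins.bw_end)
  next
    case False
    moreover have "breaker_wins V W (insert v M) B' False" if "v \<in> V - (M \<union> B')" for v
      using bw_maker(2) bw_maker.prems that by blast
    ultimately show ?thesis by (blast intro: breaker_wins.bw_maker)
  qed
qed

lemma breaker_wins_first_if_second:
  assumes "breaker_wins V W M B True" "mono W"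
  shows "breaker_wins V W M B False"
proof (cases "V - (M \<union> B) = {}")
  case True
  then show ?thesis
    using breaker_wins_imp_not_target[OF assms] by (rule breaker_wins.bw_end)
next
  case False
  then obtain v where v: "v \<in> V - (M \<union> B)" by blast
  have "breaker_wins V W M (insert v B) True"
    using breaker_wins_superset[OF assms] by blast
  with v show ?thesis by (rule breaker_wins.bw_breaker)
qed

lemma maker_wins_or_breaker_wins:
  assumes "finite V"
  shows "maker_wins V W M B t \<or> breaker_wins V W M B t"
proof -
  have "card (V - (M \<union> B)) = n \<Longrightarrow> maker_wins V W M B t \<or> breaker_wins V W M B t" for n
  proof (induction n arbitrary: M B t)
    case 0
    then have "V - (M \<union> B) = {}" using assms by simp
    then show ?case by (cases "W M") (auto intro: maker_wins.mw_end breaker_wins.bw_end)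
  next
    case (Suc n)
    then have free: "V - (M \<union> B) \<noteq> {}" by (metis card.empty nat.distinct(1))
    have "card (V - (insert v M \<union> B)) = n" "card (V - (M \<union> insert v B)) = n"
      if "v \<in> V - (M \<union> B)" for v
      using Suc.prems assms that by (auto simp: card_Diff_singleton Diff_insert[symmetric])
    then have IH: "maker_wins V W (insert v M) B False \<or> breaker_wins V W (insert v M) B False"
      "maker_wins V W M (insert v B) True \<or> breaker_wins V W M (insert v B) True"
      if "v \<in> V - (M \<union> B)" for v
      using Suc.IH that by blast+
    have "maker_wins V W M B True \<or> breaker_wins V W M B True"
      using free IH(1) maker_wins.mw_maker[of _ V M B W] breaker_wins.bw_maker[of V M B W]
      by blast
    moreover have "maker_wins V W M B False \<or> breaker_wins V W M B False"
      using free IH(2) maker_wins.mw_breaker[of V M B W] breaker_wins.bw_breaker[of _ V M B W]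
      by blast
    ultimately show ?case by (cases t) simp_all
  qed
  then show ?thesis by blast
qed

definition outcome_of :: "'a set \<Rightarrow> ('a set \<Rightarrow> bool) \<Rightarrow> outcome" where
  "outcome_of V W =
     (if maker_wins V W {} {} True \<and> maker_wins V W {} {} False then OM
      else if maker_wins V W {} {} True then ON else OB)"

lemma has_outcome_outcome_of:
  assumes "finite V" "mono W"
  shows "has_outcome V W (outcome_of V W)"
proof -
  have breaker: "breaker_wins V W {} {} t" if "\<not> maker_wins V W {} {} t" for t
    using maker_wins_or_breaker_wins[OF assms(1)] that by blast
  show ?thesis
    using breaker breaker_wins_first_if_second[OF breaker assms(2)]
    unfolding outcome_of_def has_outcome_def by auto
qed

fun outcome_rank :: "outcome \<Rightarrow> nat" where
  "outcome_rank OB = 0"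
| "outcome_rank ON = 1"
| "outcome_rank OM = 2"

lemma outcome_rank_outcome_of_mono:
  assumes "W \<le> W'"
  shows "outcome_rank (outcome_of V W) \<le> outcome_rank (outcome_of V W')"
  using maker_wins_mono_target[OF _ assms] unfolding outcome_of_def by auto

lemma outcome_pairs_rank_le:
  "(o1, o2) \<in> {(OB, OB), (OB, ON), (OB, OM), (ON, ON), (ON, OM), (OM, OM)}
     \<longleftrightarrow> outcome_rank o1 \<le> outcome_rank o2"
  by (cases o1; cases o2) auto

theorem mainTheorem5:
  fixes V :: "'a set" and E :: "'a \<Rightarrow> 'a \<Rightarrow> bool"
  assumes "connected_graph V E"
  shows "\<exists>osr orr. O_SR V E osr \<and> O_R V E orr \<and>
           (osr, orr) \<in> {(OB, OB), (OB, ON), (OB, OM), (ON, ON), (ON, OM), (OM, OM)}"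
proof -
  define WS where "WS = (\<lambda>M. \<exists>S\<subseteq>M. strong_resolving_set V E S)"
  define WR where "WR = (\<lambda>M. \<exists>R\<subseteq>M. resolving_set V E R)"
  have "finite V" using assms unfolding connected_graph_def simple_graph_def by blast
  then have "O_SR V E (outcome_of V WS)" "O_R V E (outcome_of V WR)"
    using has_outcome_outcome_of mono_exists_subset
    unfolding O_SR_def O_R_def WS_def WR_def by blast+
  moreover have "WS \<le> WR"
    unfolding WS_def WR_def using strong_resolving_set_imp_resolving_set by blast
  ultimately show ?thesis
    using outcome_rank_outcome_of_mono outcome_pairs_rank_le by blast
qed

end
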